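(* Consider the following random variables, all defined on a common probability space (one draw from a superpopulation): a binary decision (plan) variable $P\in\{0,1\}$; a binary treatment at time 2, $A_2\in\{0,1\}$; real-valued outcomes $Y_1, Y_2$ with finite expectations; and, for $p^*,a^*\in\{0,1\}$, potential outcomes $Y_1^{p=p^*}, Y_2^{p=p^*}$, $A_2^{p=p^*}$ (values had $P$ been set to $p^*$), $Y_2^{a_2=a^*}$ (value of $Y_2$ had $A_2$ been set to $a^*$), and $Y_2^{p=p^*,a_2=a^*}$ (value of $Y_2$ had $P$ been set to $p^*$ and $A_2^{p=p^*}$ been set to $a^*$). Suppose that: (i) $\Pr(A_2=a^* )>0$ for every $a^*\in\{0,1\}$; (ii) $A_2^{p=p^*}=p^*$ for every $p^*\in\{0,1\}$; (iii) $\mathbb{E}(Y_2^{p=0}-Y_1^{p=0}\mid P=1)=\mathbb{E}(Y_2^{p=0}-Y_1^{p=0}\mid P=0)$; (iv) for each $p^*\in\{0,1\}$: $Y_1^{p=p^*}=Y_1$, $Y_2^{p=p^*}=Y_2$ and $A_2^{p=p^*}=A_2$ on the event $\{P=p^*\}$; (v) $\mathbb{E}(Y_2^{p=p^*,a_2=a^*}\mid P=p')=\mathbb{E}(Y_2^{a_2=a^*}\mid P=p')$ for every $p^*,a^*,p'\in\{0,1\}$. Then \[\{\mathbb{E}(Y_2\mid A_2=1)-\mathbb{E}(Y_1\mid A_2=1)\}-\{\mathbb{E}(Y_2\mid A_2=0)-\mathbb{E}(Y_1\mid A_2=0)\}=ATT_{A_2}-\psi,\] where $ATT_{A_2}=\mathbb{E}(Y_2^{a_2=1}-Y_2^{a_2=0}\mid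 A_2=1)$ and $\psi=\mathbb{E}(Y_1^{p=1}\mid P=1)-\mathbb{E}(Y_1^{p=0}\mid P=1)$.
   Context: Difference-in-differences setting with two time points. Superscripts denote potential outcomes (counterfactual values under a hypothetical intervention fixing the indicated variable(s)); in the joint intervention $Y_2^{p=p^*,a_2=a^*}$, $P$ is set to $p^*$ and the treatment $A_2^{p=p^*}$ is then set to $a^*$. $P$ represents the decision/plan to implement a policy, $A_2$ its implementation at time 2 (no unit is treated at time 1), and $Y_1,Y_2$ the outcome measured at times 1 and 2. *)

theory Defs
  imports "HOL-Probability.Probability"
begin

definition cond_exp_ev :: "'a measure \<Rightarrow> ('a \<Rightarrow> real) \<Rightarrow> 'a set \<Rightarrow> real" where
  "cond_exp_ev M X B = (\<integral>x. indicator B x * X x \<partial>M) / measure M B"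

definition ev_eq :: "'a measure \<Rightarrow> ('a \<Rightarrow> 'b) \<Rightarrow> 'b \<Rightarrow> 'a set" where
  "ev_eq M X v = {\<omega> \<in> space M. X \<omega> = v}"

end

theory Submission
  imports Defs
begin

text \<open>Since the implemented treatment follows the plan (ii) and is consistent with it (iv),
  A2 = P, so conditioning on A2 is conditioning on P. On {P = 1}, exchangeability (v) and
  consistency identify E(Y2^{a=1} | P = 1) with E(Y2 | P = 1) and E(Y2^{a=0} | P = 1) with
  E(Y2^{p=0} | P = 1). Parallel trends (iii) replaces E(Y2^{p=0} - Y1^{p=0} | P = 1) by the
  observed E(Y2 - Y1 | P = 0), and what remains of E(Y1 | P = 1) = E(Y1^{p=1} | P = 1) is the
  anticipation term \<psi>; the rest is linearity of conditional expectation.\<close>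

lemma cond_exp_ev_cong:
  assumes "\<And>x. x \<in> space M \<Longrightarrow> x \<in> B \<Longrightarrow> f x = g x"
  shows "cond_exp_ev M f B = cond_exp_ev M g B"
  unfolding cond_exp_ev_def
  by (rule arg_cong[where f = "\<lambda>t. t / measure M B"], rule Bochner_Integration.integral_cong)
     (auto simp: indicator_def assms)

text \<open>No positivity of \<open>measure M B\<close> is needed, since \<open>x / 0 = 0\<close>.\<close>

lemma cond_exp_ev_diff:
  assumes "B \<in> sets M" "integrable M f" "integrable M g"
  shows "cond_exp_ev M (\<lambda>x. f x - g x) B = cond_exp_ev M f B - cond_exp_ev M g B"
proof -
  have "integrable M (\<lambda>x. indicator B x * f x)" "integrable M (\<lambda>x. indicator B x * g x)"
    using integrable_real_mult_indicator[OF assms(1)] assms(2,3) by (simp_all add: mult.commute)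
  then have "(\<integral>x. indicator B x * (f x - g x) \<partial>M)
      = (\<integral>x. indicator B x * f x \<partial>M) - (\<integral>x. indicator B x * g x \<partial>M)"
    by (simp add: right_diff_distrib)
  then show ?thesis
    unfolding cond_exp_ev_def by (simp add: diff_divide_distrib)
qed

lemma ev_eq_in_sets:
  assumes "X \<in> measurable M (count_space UNIV)"
  shows "ev_eq M X v \<in> sets M"
proof -
  have "ev_eq M X v = X -` {v} \<inter> space M"
    unfolding ev_eq_def by auto
  then show ?thesis
    using measurable_sets[OF assms, of "{v}"] by simp
qed

lemma ev_eq_cong:
  assumes "\<And>x. x \<in> space M \<Longrightarrow> X x = Y x"
  shows "ev_eq M X v = ev_eq M Y v"
  unfolding ev_eq_def using assms by auto

theorem proposition1:
  fixes M :: "'a measure"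
    and P A2 :: "'a \<Rightarrow> nat"
    and Y1 Y2 :: "'a \<Rightarrow> real"
    and Y1p Y2p :: "nat \<Rightarrow> 'a \<Rightarrow> real"
    and A2p :: "nat \<Rightarrow> 'a \<Rightarrow> nat"
    and Y2a :: "nat \<Rightarrow> 'a \<Rightarrow> real"
    and Y2pa :: "nat \<Rightarrow> nat \<Rightarrow> 'a \<Rightarrow> real"
  assumes M: "prob_space M"
    and P_meas: "P \<in> measurable M (count_space UNIV)"
    and A2_meas: "A2 \<in> measurable M (count_space UNIV)"
    and A2p_meas: "\<And>p. p \<in> {0,1} \<Longrightarrow> A2p p \<in> measurable M (count_space UNIV)"
    and P_bin: "\<And>\<omega>. \<omega> \<in> space M \<Longrightarrow> P \<omega> \<in> {0,1}"
    and A2_bin: "\<And>\<omega>. \<omega> \<in> space M \<Longrightarrow> A2 \<omega> \<in> {0,1}"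
    and int_Y1: "integrable M Y1"
    and int_Y2: "integrable M Y2"
    and int_Y1p: "\<And>p. p \<in> {0,1} \<Longrightarrow> integrable M (Y1p p)"
    and int_Y2p: "\<And>p. p \<in> {0,1} \<Longrightarrow> integrable M (Y2p p)"
    and int_Y2a: "\<And>a. a \<in> {0,1} \<Longrightarrow> integrable M (Y2a a)"
    and int_Y2pa: "\<And>p a. p \<in> {0,1} \<Longrightarrow> a \<in> {0,1} \<Longrightarrow> integrable M (Y2pa p a)"
    and nested: "\<And>p a \<omega>. p \<in> {0,1} \<Longrightarrow> a \<in> {0,1} \<Longrightarrow> \<omega> \<in> space M \<Longrightarrow>
                   A2p p \<omega> = a \<Longrightarrow> Y2pa p a \<omega> = Y2p p \<omega>"
    and i: "\<And>a. a \<in> {0,1} \<Longrightarrow> measure M (ev_eq M A2 a) > 0"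
    and ii: "\<And>p \<omega>. p \<in> {0,1} \<Longrightarrow> \<omega> \<in> space M \<Longrightarrow> A2p p \<omega> = p"
    and iii: "cond_exp_ev M (\<lambda>\<omega>. Y2p 0 \<omega> - Y1p 0 \<omega>) (ev_eq M P 1)
              = cond_exp_ev M (\<lambda>\<omega>. Y2p 0 \<omega> - Y1p 0 \<omega>) (ev_eq M P 0)"
    and iv: "\<And>p \<omega>. p \<in> {0,1} \<Longrightarrow> \<omega> \<in> space M \<Longrightarrow> P \<omega> = p \<Longrightarrow>
               Y1p p \<omega> = Y1 \<omega> \<and> Y2p p \<omega> = Y2 \<omega> \<and> A2p p \<omega> = A2 \<omega>"
    and v: "\<And>p a p'. p \<in> {0,1} \<Longrightarrow> a \<in> {0,1} \<Longrightarrow> p' \<in> {0,1} \<Longrightarrow>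
              cond_exp_ev M (Y2pa p a) (ev_eq M P p') = cond_exp_ev M (Y2a a) (ev_eq M P p')"
  shows "(cond_exp_ev M Y2 (ev_eq M A2 1) - cond_exp_ev M Y1 (ev_eq M A2 1))
         - (cond_exp_ev M Y2 (ev_eq M A2 0) - cond_exp_ev M Y1 (ev_eq M A2 0))
         = cond_exp_ev M (\<lambda>\<omega>. Y2a 1 \<omega> - Y2a 0 \<omega>) (ev_eq M A2 1)
           - (cond_exp_ev M (Y1p 1) (ev_eq M P 1) - cond_exp_ev M (Y1p 0) (ev_eq M P 1))"
proof -
  have "A2 \<omega> = P \<omega>" if "\<omega> \<in> space M" for \<omega>
    using that P_bin ii iv by (metis insertCI)
  then have A2_ev: "ev_eq M A2 a = ev_eq M P a" for a
    by (rule ev_eq_cong)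
  have P_in: "\<omega> \<in> ev_eq M P p \<Longrightarrow> P \<omega> = p" for \<omega> p
    unfolding ev_eq_def by simp
  have sets: "ev_eq M P 0 \<in> sets M" "ev_eq M P 1 \<in> sets M"
    using ev_eq_in_sets[OF P_meas] by auto
  have Y1_treated: "cond_exp_ev M (Y1p 1) (ev_eq M P 1) = cond_exp_ev M Y1 (ev_eq M P 1)"
    by (rule cond_exp_ev_cong) (use iv P_in in auto)
  have "cond_exp_ev M (Y2a 1) (ev_eq M P 1) = cond_exp_ev M (Y2pa 1 1) (ev_eq M P 1)"
    using v[of 1 1 1] by simp
  also have "\<dots> = cond_exp_ev M Y2 (ev_eq M P 1)"
    by (rule cond_exp_ev_cong) (use iv P_in nested ii in auto)
  finally have Y2a1_treated: "cond_exp_ev M (Y2a 1) (ev_eq M P 1) = cond_exp_ev M Y2 (ev_eq M P 1)" .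
  have "cond_exp_ev M (Y2a 0) (ev_eq M P 1) = cond_exp_ev M (Y2pa 0 0) (ev_eq M P 1)"
    using v[of 0 0 1] by simp
  also have "\<dots> = cond_exp_ev M (Y2p 0) (ev_eq M P 1)"
    by (rule cond_exp_ev_cong) (use nested ii in auto)
  finally have Y2a0_treated: "cond_exp_ev M (Y2a 0) (ev_eq M P 1) = cond_exp_ev M (Y2p 0) (ev_eq M P 1)" .
  have "cond_exp_ev M (Y2p 0) (ev_eq M P 1) - cond_exp_ev M (Y1p 0) (ev_eq M P 1)
      = cond_exp_ev M (\<lambda>\<omega>. Y2p 0 \<omega> - Y1p 0 \<omega>) (ev_eq M P 0)"
    using iii cond_exp_ev_diff[OF sets(2) int_Y2p int_Y1p] by simp
  also have "\<dots> = cond_exp_ev M (\<lambda>\<omega>. Y2 \<omega> - Y1 \<omega>) (ev_eq M P 0)"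
    by (rule cond_exp_ev_cong) (use iv P_in in auto)
  also have "\<dots> = cond_exp_ev M Y2 (ev_eq M P 0) - cond_exp_ev M Y1 (ev_eq M P 0)"
    using cond_exp_ev_diff[OF sets(1) int_Y2 int_Y1] .
  finally have parallel_trends: "cond_exp_ev M (Y2p 0) (ev_eq M P 1) - cond_exp_ev M (Y1p 0) (ev_eq M P 1)
      = cond_exp_ev M Y2 (ev_eq M P 0) - cond_exp_ev M Y1 (ev_eq M P 0)" .
  have ATT: "cond_exp_ev M (\<lambda>\<omega>. Y2a 1 \<omega> - Y2a 0 \<omega>) (ev_eq M P 1)
      = cond_exp_ev M (Y2a 1) (ev_eq M P 1) - cond_exp_ev M (Y2a 0) (ev_eq M P 1)"
    using cond_exp_ev_diff[OF sets(2) int_Y2a int_Y2a] by simp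
  show ?thesis
    unfolding A2_ev
    using ATT Y1_treated Y2a1_treated Y2a0_treated parallel_trends by linarith
qed

end
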